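(* A graph in the family $\mathcal{C}$ is word-representable if and only if it belongs to $\mathcal{C}_3$. That is, $F_0$, every even $k$-sun ($k\ge4$ even), and every $F_1(k)$ and $F_2(k)$ ($k\ge5$ odd) are word-representable, while every odd $k$-sun with center ($k\ge3$ odd), $K_1\vee\text{tent}$, $M_{\rm II}(k)$ ($k\ge4$ even), $M_{\rm III}(3)$, $M_{\rm III}(k)$ ($k\ge4$ even), $M_{\rm IV}$ and $M_{\rm V}$ are not.
   Context: All graphs below are split graphs given by a clique $C$ and independent set $I$ with the listed neighbourhoods of vertices of $I$. Odd $k$-sun with center ($k\ge3$ odd): $C=\{c,c_1,\dots,c_k\}$, $I=\{a_1,\dots,a_k\}$, $N(a_i)=\{c_i,c_{i+1}\}$ ($1\le i\le k-1$), $N(a_k)=\{c_1,c_k\}$. Tent: $C=\{x_1,x_2,x_3\}$, $I=\{y_1,y_2,y_3\}$, $N(y_1)=\{x_1,x_2\}$, $N(y_2)=\{x_2,x_3\}$, $N(y_3)=\{x_1,x_3\}$; $K_1\vee\text{tent}$ is the tent plus a vertex adjacent to all six vertices. Even $k$-sun ($k\ge4$ even): $C=\{c_1,\dots,c_k\}$, $I=\{a_1,\dots,a_k\}$, $N(a_i)=\{c_i,c_{i+1}\}$ ($1\le i\le k-1$), $N(a_k)=\{c_1,c_k\}$. $M_{\rm II}(k)$ ($k\ge4$ even): $C=\{c_1,\dots,c_k\}$, $I=\{b_1,b_2,a_1,\dots,a_{k-2}\}$, $N(b_1)=\{c_1,\dots,c_{k-2},c_k\}$, $N(b_2)=\{c_2,\dots,c_k\}$,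 $N(a_i)=\{c_i,c_{i+1}\}$ ($1\le i\le k-2$). $M_{\rm III}(3)$: the net (triangle $x_1x_2x_3$ plus vertices $y_1,y_2,y_3$ with $y_i$ adjacent only to $x_i$) plus a vertex adjacent to all six vertices. $M_{\rm III}(k)$ ($k\ge4$ even): $C=\{c_1,\dots,c_{k+1}\}$, $I=\{b,a_1,\dots,a_{k-1}\}$, $N(b)=\{c_2,\dots,c_{k-1},c_{k+1}\}$, $N(a_i)=\{c_i,c_{i+1}\}$ ($1\le i\le k-1$). $M_{\rm IV}$: $C=\{c_1,\dots,c_6\}$, $I=\{a_1,\dots,a_4\}$, $N(a_1)=\{c_1,c_2\}$, $N(a_2)=\{c_3,c_4\}$, $N(a_3)=\{c_5,c_6\}$, $N(a_4)=\{c_2,c_4,c_6\}$. $M_{\rm V}$: $C=\{c_1,\dots,c_5\}$, $I=\{a_1,\dots,a_4\}$, $N(a_1)=\{c_1,c_2\}$, $N(a_2)=\{c_3,c_4\}$, $N(a_3)=\{c_1,c_4,c_5\}$, $N(a_4)=\{c_1,c_2,c_3,c_4\}$. $F_0$: $C=\{0,c_1,c_2,c_3,c_4\}$, $I=\{a_1,a_2,a_3\}$, $N(a_1)=\{0,c_2,c_3\}$, $N(a_2)=\{0,c_3,c_4\}$, $N(a_3)=\{0,c_1,c_4\}$. $F_1(k)$ ($k\ge5$ odd): $C=\{c_1,\dots,c_{k-1}\}$, $I=\{b_1,b_2,a_1,\dots,a_{k-2}\}$, $N(b_1)=\{c_1,\dots,c_{k-2}\}$, $N(b_2)=\{c_2,\dots,c_{k-1}\}$,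 $N(a_i)=\{c_i,c_{i+1}\}$ ($1\le i\le k-2$). $F_2(k)$ ($k\ge5$ odd): $C=\{c_1,\dots,c_k\}$, $I=\{b,a_1,\dots,a_{k-1}\}$, $N(b)=\{c_2,\dots,c_{k-1}\}$, $N(a_i)=\{c_i,c_{i+1}\}$ ($1\le i\le k-1$). $\mathcal{C}$ is the family consisting of all of the graphs listed above; $\mathcal{C}_3\subseteq\mathcal{C}$ consists of $F_0$, the even $k$-suns ($k\ge4$ even), and $F_1(k)$, $F_2(k)$ ($k\ge5$ odd). A graph $G=(V,E)$ is word-representable if there is a word $w$ over $V$ such that for all distinct $a,b\in V$, $ab\in E$ iff $a$ and $b$ alternate in $w$ (i.e. the subsequence of $w$ formed by all occurrences of $a$ and $b$ is $abab\cdots$ or $baba\cdots$). *)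

theory Defs
  imports Main
begin

type_synonym 'v graph = "'v set \<times> ('v \<Rightarrow> 'v \<Rightarrow> bool)"

definition alternate :: "'v list \<Rightarrow> 'v \<Rightarrow> 'v \<Rightarrow> bool" where
  "alternate w a b \<longleftrightarrow>
     (let s = filter (\<lambda>c. c = a \<or> c = b) w in
       (\<forall>i<length s. s ! i = (if even i then a else b)) \<or>
       (\<forall>i<length s. s ! i = (if even i then b else a)))"

definition word_representable :: "'v graph \<Rightarrow> bool" where
  "word_representable G \<longleftrightarrow>
     (\<exists>w. set w = fst G \<and>
        (\<forall>a\<in>fst G. \<forall>b\<in>fst G. a \<noteq> b \<longrightarrow> (snd G a b \<longleftrightarrow> alternate w a b)))"

text \<open>Split graph with clique vertices Inl c (c \<in> C), independent vertices Inr i (i \<in> I),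
  and N i the (clique) neighbourhood of Inr i.\<close>
definition split_graph :: "nat set \<Rightarrow> nat set \<Rightarrow> (nat \<Rightarrow> nat set) \<Rightarrow> (nat + nat) graph" where
  "split_graph C I N =
    (Inl ` C \<union> Inr ` I,
     \<lambda>u v. u \<in> Inl ` C \<union> Inr ` I \<and> v \<in> Inl ` C \<union> Inr ` I \<and> u \<noteq> v \<and>
       (case (u, v) of
          (Inl _, Inl _) \<Rightarrow> True
        | (Inl c, Inr i) \<Rightarrow> c \<in> N i
        | (Inr i, Inl c) \<Rightarrow> c \<in> N i
        | (Inr _, Inr _) \<Rightarrow> False))"

text \<open>Cycle neighbourhoods: a_i ~ {c_i, c_(i+1)} for i < k, a_k ~ {c_1, c_k}.\<close>
definition sun_nbr :: "nat \<Rightarrow> nat \<Rightarrow> nat set" where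
  "sun_nbr k i = (if i < k then {i, i+1} else {1, k})"

text \<open>Odd k-sun with center: the center c is Inl 0, c_i = Inl i, a_i = Inr i.\<close>
definition odd_sun_center :: "nat \<Rightarrow> (nat + nat) graph" where
  "odd_sun_center k = split_graph {0..k} {1..k} (sun_nbr k)"

text \<open>K_1 join tent: x_i = Inl i, the extra vertex is Inl 4, y_i = Inr i.\<close>
definition K1_tent :: "(nat + nat) graph" where
  "K1_tent = split_graph {1..4} {1..3}
     (\<lambda>i. if i = 1 then {1,2,4} else if i = 2 then {2,3,4} else {1,3,4})"

definition even_sun :: "nat \<Rightarrow> (nat + nat) graph" where
  "even_sun k = split_graph {1..k} {1..k} (sun_nbr k)"

text \<open>M_II(k): a_i = Inr i (i \<le> k-2), b_1 = Inr (k-1), b_2 = Inr k.\<close>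
definition M_II :: "nat \<Rightarrow> (nat + nat) graph" where
  "M_II k = split_graph {1..k} {1..k}
     (\<lambda>i. if i \<le> k - 2 then {i, i+1}
          else if i = k - 1 then {1..k-2} \<union> {k} else {2..k})"

text \<open>M_III(3): net triangle x_i = Inl i, universal vertex Inl 4, y_i = Inr i.\<close>
definition M_III3 :: "(nat + nat) graph" where
  "M_III3 = split_graph {1..4} {1..3} (\<lambda>i. {i, 4})"

text \<open>M_III(k), k even: a_i = Inr i (i \<le> k-1), b = Inr k.\<close>
definition M_III :: "nat \<Rightarrow> (nat + nat) graph" where
  "M_III k = split_graph {1..k+1} {1..k}
     (\<lambda>i. if i \<le> k - 1 then {i, i+1} else {2..k-1} \<union> {k+1})"

definition M_IV :: "(nat + nat) graph" where
  "M_IV = split_graph {1..6} {1..4}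
     (\<lambda>i. if i = 1 then {1,2} else if i = 2 then {3,4} else if i = 3 then {5,6} else {2,4,6})"

definition M_V :: "(nat + nat) graph" where
  "M_V = split_graph {1..5} {1..4}
     (\<lambda>i. if i = 1 then {1,2} else if i = 2 then {3,4} else if i = 3 then {1,4,5} else {1,2,3,4})"

text \<open>F_0: the clique vertex 0 is Inl 0.\<close>
definition F0 :: "(nat + nat) graph" where
  "F0 = split_graph {0..4} {1..3}
     (\<lambda>i. if i = 1 then {0,2,3} else if i = 2 then {0,3,4} else {0,1,4})"

text \<open>F_1(k): a_i = Inr i (i \<le> k-2), b_1 = Inr (k-1), b_2 = Inr k.\<close>
definition F1 :: "nat \<Rightarrow> (nat + nat) graph" where
  "F1 k = split_graph {1..k-1} {1..k}
     (\<lambda>i. if i \<le> k - 2 then {i, i+1}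
          else if i = k - 1 then {1..k-2} else {2..k-1})"

text \<open>F_2(k): a_i = Inr i (i \<le> k-1), b = Inr k.\<close>
definition F2 :: "nat \<Rightarrow> (nat + nat) graph" where
  "F2 k = split_graph {1..k} {1..k}
     (\<lambda>i. if i \<le> k - 1 then {i, i+1} else {2..k-1})"

end

theory Submission
  imports Defs "HOL-Library.Sublist"
begin

text \<open>Two distinct letters alternate in a word iff one of them leads the other: every prefix
  contains as many occurrences of the first as of the second, or exactly one more.

  In a word in which every letter occurs three times, two letters alternate iff
  their occurrences interleave. Each of F_0, the even suns, F_1(k) and F_2(k) is therefore
  represented by giving every vertex three positions such that exactly the adjacent pairs
  interleave.

  In a word representing a split graph, leading is a linear order on the
  clique; arrange the clique vertices on a cycle in this order. If a non-neighbour of an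
  independent vertex i lies between two neighbours of i, then i is led by the lower and leads
  the upper neighbour, and this forces every vertex outside their interval into N(i). Hence a
  neighbourhood with two elements, or missing exactly two clique vertices, consists of
  neighbours on the cycle; if N(b) and N(b') miss exactly x and y respectively, then x and y
  are neighbours on the cycle; and a neighbourhood with three elements contains a vertex that
  is a cycle neighbour of the other two. In the forbidden graphs this yields a cycle through
  all clique vertices but one, a vertex with three cycle neighbours, or a triangle in a
  4-cycle. For M_V one also uses that two independent vertices with the same two neighbours
  straddle them in the same orientation.\<close>

section \<open>Alternation and leading\<close>

definition alternating :: "'v list \<Rightarrow> 'v \<Rightarrow> 'v \<Rightarrow> bool" where
  "alternating s x y \<longleftrightarrow> (\<forall>i<length s. s ! i = (if even i then x else y))"

definition leads :: "'v list \<Rightarrow> 'v \<Rightarrow> 'v \<Rightarrow> bool" where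
  "leads w x y \<longleftrightarrow>
     (\<forall>u. prefix u w \<longrightarrow> count_list u y \<le> count_list u x \<and> count_list u x \<le> count_list u y + 1)"

lemma alternating_snoc:
  "alternating (s @ [c]) x y \<longleftrightarrow> alternating s x y \<and> c = (if even (length s) then x else y)"
proof -
  have "(\<forall>i<length s. (s @ [c]) ! i = (if even i then x else y)) \<longleftrightarrow> alternating s x y"
    by (simp add: alternating_def nth_append)
  then show ?thesis
    unfolding alternating_def by (simp add: All_less_Suc conj_commute)
qed

lemma leads_Nil: "leads [] x y"
  by (simp add: leads_def)

lemma leads_snoc:
  "leads (w @ [c]) x y \<longleftrightarrow> leads w x y \<and>
     count_list (w @ [c]) y \<le> count_list (w @ [c]) x \<and>
     count_list (w @ [c]) x \<le> count_list (w @ [c]) y + 1"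
  by (auto simp: leads_def)

lemma leads_whole:
  "leads w x y \<Longrightarrow> count_list w y \<le> count_list w x \<and> count_list w x \<le> count_list w y + 1"
  by (simp add: leads_def)

lemma length_filter_two:
  "x \<noteq> y \<Longrightarrow> length (filter (\<lambda>c. c = x \<or> c = y) w) = count_list w x + count_list w y"
  by (induction w) auto

lemma alternating_filter_iff_leads:
  assumes "x \<noteq> y"
  shows "alternating (filter (\<lambda>c. c = x \<or> c = y) w) x y \<longleftrightarrow> leads w x y"
proof (induction w rule: rev_induct)
  case Nil
  then show ?case by (simp add: alternating_def leads_Nil)
next
  case (snoc c w)
  let ?s = "filter (\<lambda>c. c = x \<or> c = y) w"
  show ?case
  proof (cases "leads w x y")
    case False
    then show ?thesis
      using snoc by (cases "c = x \<or> c = y") (auto simp: alternating_snoc leads_snoc)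
  next
    case True
    have "alternating (filter (\<lambda>c. c = x \<or> c = y) (w @ [c])) x y \<longleftrightarrow>
          alternating ?s x y \<and> (c = x \<or> c = y \<longrightarrow> c = (if even (length ?s) then x else y))"
      by (cases "c = x \<or> c = y") (auto simp: alternating_snoc)
    also have "\<dots> \<longleftrightarrow> leads (w @ [c]) x y"
    proof -
      have bounds: "count_list w y \<le> count_list w x" "count_list w x \<le> count_list w y + 1"
        using leads_whole[OF True] by auto
      then have "even (length ?s) \<longleftrightarrow> count_list w x = count_list w y"
        unfolding length_filter_two[OF assms] by presburger
      then show ?thesis
        using snoc.IH True assms bounds unfolding leads_snoc by auto
    qed
    finally show ?thesis .
  qed
qed

lemma alternate_iff_leads:
  assumes "x \<noteq> y"
  shows "alternate w x y \<longleftrightarrow> leads w x y \<or> leads w y x"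
proof -
  have "filter (\<lambda>c. c = x \<or> c = y) w = filter (\<lambda>c. c = y \<or> c = x) w"
    by (metis disj_commute)
  then show ?thesis
    using alternating_filter_iff_leads[OF assms, of w] alternating_filter_iff_leads[of y x w] assms
    unfolding alternate_def Let_def alternating_def by auto
qed

lemma leads_refl: "leads w x x"
  by (simp add: leads_def)

lemma leads_antisym:
  assumes "x \<in> set w" "x \<noteq> y" "leads w x y"
  shows "\<not> leads w y x"
proof
  assume "leads w y x"
  then have eq: "count_list u x = count_list u y" if "prefix u w" for u
    using assms(3) that unfolding leads_def by (meson le_antisym)
  obtain u v where "w = u @ x # v"
    using assms(1) by (meson split_list)
  then have "prefix u w" "prefix (u @ [x]) w"
    by (simp_all add: prefix_def)
  then show False
    using eq[of u] eq[of "u @ [x]"] assms(2) by simp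
qed

lemma leads_trans:
  assumes "leads w x y" "leads w y z" "leads w x z \<or> leads w z x"
  shows "leads w x z"
  unfolding leads_def
proof (intro allI impI)
  fix u assume "prefix u w"
  then have "count_list u y \<le> count_list u x" "count_list u z \<le> count_list u y"
    "count_list u z \<le> count_list u x \<and> count_list u x \<le> count_list u z + 1 \<or>
     count_list u x \<le> count_list u z \<and> count_list u z \<le> count_list u x + 1"
    using assms unfolding leads_def by blast+
  then show "count_list u z \<le> count_list u x \<and> count_list u x \<le> count_list u z + 1"
    by linarith
qed

lemma leads_chain:
  assumes "leads w x y" "leads w y z" "leads w z u" "leads w x u"
  shows "leads w x z \<and> leads w y u"
  unfolding leads_def
proof (intro allI impI conjI)
  fix v assume "prefix v w"
  then have "count_list v y \<le> count_list v x" "count_list v z \<le> count_list v y"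
    "count_list v u \<le> count_list v z" "count_list v x \<le> count_list v u + 1"
    using assms unfolding leads_def by blast+
  then show "count_list v z \<le> count_list v x" "count_list v x \<le> count_list v z + 1"
    "count_list v u \<le> count_list v y" "count_list v y \<le> count_list v u + 1"
    by linarith+
qed

section \<open>Words from placements of three occurrences per letter\<close>

text \<open>A placement p puts the three occurrences of a letter v at the positions p v 0, p v 1 and
  p v 2; the word of a placement lists the letters by position.\<close>
type_synonym 'v placement = "'v \<Rightarrow> nat \<Rightarrow> int"

definition tagged_positions :: "'v placement \<Rightarrow> 'v \<Rightarrow> (int \<times> 'v) list" where
  "tagged_positions p v = [(p v 0, v), (p v 1, v), (p v 2, v)]"

definition word_of_placement :: "'v list \<Rightarrow> 'v placement \<Rightarrow> 'v list" where
  "word_of_placement vs p = map snd (sort_key fst (concat (map (tagged_positions p) vs)))"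

definition count_below :: "(nat \<Rightarrow> int) \<Rightarrow> int \<Rightarrow> nat" where
  "count_below q \<theta> =
     (if q 0 < \<theta> then 1 else 0) + (if q 1 < \<theta> then 1 else 0) + (if q 2 < \<theta> then 1 else 0)"

definition interleaved :: "(nat \<Rightarrow> int) \<Rightarrow> (nat \<Rightarrow> int) \<Rightarrow> bool" where
  "interleaved p q \<longleftrightarrow> p 0 < q 0 \<and> q 0 < p 1 \<and> p 1 < q 1 \<and> q 1 < p 2 \<and> p 2 < q 2"

definition disjoint_positions :: "(nat \<Rightarrow> int) \<Rightarrow> (nat \<Rightarrow> int) \<Rightarrow> bool" where
  "disjoint_positions p q \<longleftrightarrow> (\<forall>s<3. \<forall>t<3. p s \<noteq> q t)"

lemma set_word_of_placement: "set (word_of_placement vs p) = set vs"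
  unfolding word_of_placement_def by (force simp: tagged_positions_def)

lemma distinct_map_sort_key: "distinct (map f (sort_key f xs)) \<longleftrightarrow> distinct (map f xs)"
  by (induction xs) (auto simp: distinct_insort_key set_insort_key)

lemma strict_sorted_take_eq_filter:
  assumes "sorted_wrt (<) (map fst (s :: (int \<times> 'v) list))"
  shows "\<exists>\<theta>. take j s = filter (\<lambda>q. fst q < \<theta>) s"
  using assms
proof (induction s arbitrary: j)
  case Nil
  then show ?case by simp
next
  case (Cons a s)
  show ?case
  proof (cases j)
    case 0
    have "filter (\<lambda>q. fst q < fst a) (a # s) = []"
      using Cons.prems by (auto simp: filter_empty_conv)
    then show ?thesis using 0 by (metis take0)
  next
    case (Suc j')
    obtain \<theta> where \<theta>: "take j' s = filter (\<lambda>q. fst q < \<theta>) s"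
      using Cons by auto
    show ?thesis
    proof (cases "\<theta> \<le> fst a")
      case True
      then have "filter (\<lambda>q. fst q < \<theta>) s = []" "filter (\<lambda>q. fst q < fst a + 1) (a # s) = [a]"
        using Cons.prems by (auto simp: filter_empty_conv)
      then show ?thesis using \<theta> Suc by (metis take_Suc_Cons)
    next
      case False
      then show ?thesis using \<theta> Suc by (metis take_Suc_Cons filter.simps(2) not_le)
    qed
  qed
qed

lemma strict_sorted_filter_eq_take:
  assumes "sorted_wrt (<) (map fst (s :: (int \<times> 'v) list))"
  shows "\<exists>j. take j s = filter (\<lambda>q. fst q < \<theta>) s"
  using assms
proof (induction s)
  case Nil
  then show ?case by simp
next
  case (Cons a s)
  show ?case
  proof (cases "fst a < \<theta>")
    case True
    then obtain j where "take j s = filter (\<lambda>q. fst q < \<theta>) s"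
      using Cons by auto
    then have "take (Suc j) (a # s) = filter (\<lambda>q. fst q < \<theta>) (a # s)"
      using True by simp
    then show ?thesis by blast
  next
    case False
    then have "filter (\<lambda>q. fst q < \<theta>) (a # s) = []"
      using Cons.prems by (auto simp: filter_empty_conv)
    then show ?thesis by (metis take0)
  qed
qed

lemma count_below_tagged:
  assumes "distinct vs" "y \<in> set vs"
  shows "length (filter (\<lambda>q. snd q = y \<and> fst q < \<theta>) (concat (map (tagged_positions p) vs)))
         = count_below (p y) \<theta>"
  using assms
proof (induction vs)
  case Nil
  then show ?case by simp
next
  case (Cons v vs)
  show ?case
  proof (cases "v = y")
    case True
    then have "filter (\<lambda>q. snd q = y \<and> fst q < \<theta>) (concat (map (tagged_positions p) vs)) = []"
      using Cons.prems by (auto simp: filter_empty_conv tagged_positions_def)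
    then show ?thesis
      using True by (simp add: tagged_positions_def[of p y] count_below_def)
  next
    case False
    then show ?thesis
      using Cons by (simp add: tagged_positions_def)
  qed
qed

lemma prefix_counts_word_of_placement:
  assumes "distinct vs" "distinct (map fst (concat (map (tagged_positions p) vs)))"
  shows "(\<forall>u. prefix u (word_of_placement vs p) \<longrightarrow>
            (\<exists>\<theta>. \<forall>y\<in>set vs. count_list u y = count_below (p y) \<theta>))
       \<and> (\<forall>\<theta>. \<exists>u. prefix u (word_of_placement vs p) \<and>
            (\<forall>y\<in>set vs. count_list u y = count_below (p y) \<theta>))"
proof -
  define L where "L = concat (map (tagged_positions p) vs)"
  define s where "s = sort_key fst L"
  have sorted: "sorted_wrt (<) (map fst s)"
    using assms(2) unfolding s_def L_def
    by (simp add: strict_sorted_iff distinct_map_sort_key)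
  have count: "count_list (map snd (take j s)) y = count_below (p y) \<theta>"
    if "take j s = filter (\<lambda>q. fst q < \<theta>) s" "y \<in> set vs" for j \<theta> y
  proof -
    have "count_list (map snd (take j s)) y = length (filter (\<lambda>q. snd q = y \<and> fst q < \<theta>) L)"
      unfolding that(1) unfolding s_def
      by (simp add: count_list_eq_length_filter filter_map filter_sort filter_filter comp_def
          eq_commute conj_commute)
    then show ?thesis
      unfolding L_def using count_below_tagged[OF assms(1) that(2)] by simp
  qed
  have prefixes: "prefix u (map snd s) \<longleftrightarrow> (\<exists>j. u = map snd (take j s))" for u
    by (metis prefix_def take_is_prefix take_map append_eq_conv_conj)
  show ?thesis
    unfolding word_of_placement_def s_def[symmetric] L_def[symmetric] prefixes
    using count strict_sorted_take_eq_filter[OF sorted] strict_sorted_filter_eq_take[OF sorted]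
    by metis
qed

lemma leads_word_of_placement_iff:
  assumes "distinct vs" "distinct (map fst (concat (map (tagged_positions p) vs)))"
    and "x \<in> set vs" "y \<in> set vs"
  shows "leads (word_of_placement vs p) x y \<longleftrightarrow>
    (\<forall>\<theta>. count_below (p y) \<theta> \<le> count_below (p x) \<theta> \<and> count_below (p x) \<theta> \<le> count_below (p y) \<theta> + 1)"
  using prefix_counts_word_of_placement[OF assms(1,2)] assms(3,4) unfolding leads_def by metis

lemma count_below_le_iff:
  assumes "p 0 < p 1" "p 1 < p 2" "q 0 < q 1" "q 1 < q 2"
  shows "(\<forall>\<theta>. count_below q \<theta> \<le> count_below p \<theta>) \<longleftrightarrow> p 0 \<le> q 0 \<and> p 1 \<le> q 1 \<and> p 2 \<le> q 2"
proof
  assume "\<forall>\<theta>. count_below q \<theta> \<le> count_below p \<theta>"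
  then have "count_below q (q 0 + 1) \<le> count_below p (q 0 + 1)"
    "count_below q (q 1 + 1) \<le> count_below p (q 1 + 1)"
    "count_below q (q 2 + 1) \<le> count_below p (q 2 + 1)"
    by auto
  then show "p 0 \<le> q 0 \<and> p 1 \<le> q 1 \<and> p 2 \<le> q 2"
    using assms unfolding count_below_def by (auto split: if_splits)
qed (use assms in \<open>auto simp: count_below_def\<close>)

lemma count_below_le_Suc_iff:
  assumes "p 0 < p 1" "p 1 < p 2" "q 0 < q 1" "q 1 < q 2"
  shows "(\<forall>\<theta>. count_below p \<theta> \<le> count_below q \<theta> + 1) \<longleftrightarrow> q 0 \<le> p 1 \<and> q 1 \<le> p 2"
proof
  assume "\<forall>\<theta>. count_below p \<theta> \<le> count_below q \<theta> + 1"
  then have "count_below p (p 1 + 1) \<le> count_below q (p 1 + 1) + 1"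
    "count_below p (p 2 + 1) \<le> count_below q (p 2 + 1) + 1"
    by auto
  then show "q 0 \<le> p 1 \<and> q 1 \<le> p 2"
    using assms unfolding count_below_def by (auto split: if_splits)
qed (use assms in \<open>auto simp: count_below_def\<close>)
lemma count_below_leads_iff_interleaved:
  assumes "p 0 < p 1" "p 1 < p 2" "q 0 < q 1" "q 1 < q 2" "disjoint_positions p q"
  shows "(\<forall>\<theta>. count_below q \<theta> \<le> count_below p \<theta> \<and> count_below p \<theta> \<le> count_below q \<theta> + 1)
    \<longleftrightarrow> interleaved p q"
proof -
  have "p s \<noteq> q t" if "s < 3" "t < 3" for s t
    using assms(5) that unfolding disjoint_positions_def by blast
  then have "p 0 \<noteq> q 0" "p 1 \<noteq> q 1" "p 2 \<noteq> q 2" "p 1 \<noteq> q 0" "p 2 \<noteq> q 1"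
    by auto
  then show ?thesis
    using count_below_le_iff[OF assms(1-4)] count_below_le_Suc_iff[OF assms(1-4)]
    unfolding interleaved_def by fastforce
qed

lemma distinct_tagged_positions:
  assumes "distinct vs"
    and "\<forall>v\<in>set vs. p v 0 < p v 1 \<and> p v 1 < p v 2"
    and "\<forall>x\<in>set vs. \<forall>y\<in>set vs. x \<noteq> y \<longrightarrow> disjoint_positions (p x) (p y)"
  shows "distinct (map fst (concat (map (tagged_positions p) vs)))"
  using assms
proof (induction vs)
  case Nil
  then show ?case by simp
next
  case (Cons v vs)
  have "set (map fst (concat (map (tagged_positions p) vs))) = (\<Union>u\<in>set vs. {p u 0, p u 1, p u 2})"
    by (auto simp: tagged_positions_def image_iff)
  moreover have "p v s \<noteq> p u t" if "u \<in> set vs" "s < 3" "t < 3" for u s t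
    using Cons.prems that unfolding disjoint_positions_def
    by (metis list.set_intros distinct.simps(2))
  ultimately have "p v s \<notin> set (map fst (concat (map (tagged_positions p) vs)))" if "s < 3" for s
    using that by auto
  then show ?case
    using Cons by (simp add: tagged_positions_def[of p v])
qed

definition realises :: "bool \<Rightarrow> (nat \<Rightarrow> int) \<Rightarrow> (nat \<Rightarrow> int) \<Rightarrow> bool" where
  "realises e p q \<longleftrightarrow> disjoint_positions p q \<and> (e \<longleftrightarrow> interleaved p q \<or> interleaved q p)"

lemma word_representable_of_placement:
  fixes vs :: "'v list" and p :: "'v placement"
  assumes "distinct vs"
    and increasing: "\<forall>v\<in>set vs. p v 0 < p v 1 \<and> p v 1 < p v 2"
    and realised: "\<forall>x\<in>set vs. \<forall>y\<in>set vs. x \<noteq> y \<longrightarrow> realises (E x y) (p x) (p y)"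
  shows "word_representable (set vs, E)"
proof -
  let ?w = "word_of_placement vs p"
  have disjoint: "\<forall>x\<in>set vs. \<forall>y\<in>set vs. x \<noteq> y \<longrightarrow> disjoint_positions (p x) (p y)"
    using realised unfolding realises_def by blast
  then have keys: "distinct (map fst (concat (map (tagged_positions p) vs)))"
    using distinct_tagged_positions assms(1,2) by blast
  have "leads ?w x y \<longleftrightarrow> interleaved (p x) (p y)"
    if "x \<in> set vs" "y \<in> set vs" "x \<noteq> y" for x y
    using leads_word_of_placement_iff[OF assms(1) keys that(1,2)]
      count_below_leads_iff_interleaved[of "p x" "p y"] increasing disjoint that by simp
  then have "alternate ?w x y \<longleftrightarrow> E x y"
    if "x \<in> set vs" "y \<in> set vs" "x \<noteq> y" for x y
    using alternate_iff_leads[OF that(3)] realised that unfolding realises_def by metis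
  then show ?thesis
    unfolding word_representable_def using set_word_of_placement by (metis fst_conv snd_conv)
qed

lemma disjoint_positions_commute: "disjoint_positions p q \<longleftrightarrow> disjoint_positions q p"
  unfolding disjoint_positions_def by metis

lemma realises_commute: "realises e p q \<longleftrightarrow> realises e q p"
  unfolding realises_def using disjoint_positions_commute by blast

lemma disjoint_positions_iff:
  "disjoint_positions p q \<longleftrightarrow> p 0 \<notin> {q 0, q 1, q 2} \<and> p 1 \<notin> {q 0, q 1, q 2} \<and> p 2 \<notin> {q 0, q 1, q 2}"
  by (simp add: disjoint_positions_def numeral_3_eq_3 All_less_Suc numeral_2_eq_2 conj_ac)

lemma split_graph_simps [simp]:
  "fst (split_graph C I N) = Inl ` C \<union> Inr ` I"
  "snd (split_graph C I N) (Inl j) (Inl j') \<longleftrightarrow> j \<in> C \<and> j' \<in> C \<and> j \<noteq> j'"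
  "snd (split_graph C I N) (Inr i) (Inl j) \<longleftrightarrow> i \<in> I \<and> j \<in> C \<and> j \<in> N i"
  "snd (split_graph C I N) (Inl j) (Inr i) \<longleftrightarrow> i \<in> I \<and> j \<in> C \<and> j \<in> N i"
  "\<not> snd (split_graph C I N) (Inr i) (Inr i')"
  by (auto simp: split_graph_def)

lemma word_representable_split_graph_by_placement:
  fixes p :: "(nat + nat) placement"
  assumes "finite C" "finite I"
    and increasing: "\<And>v. v \<in> Inl ` C \<union> Inr ` I \<Longrightarrow> p v 0 < p v 1 \<and> p v 1 < p v 2"
    and clique: "\<And>j j'. j \<in> C \<Longrightarrow> j' \<in> C \<Longrightarrow> j < j' \<Longrightarrow> realises True (p (Inl j)) (p (Inl j'))"
    and cross: "\<And>i j. i \<in> I \<Longrightarrow> j \<in> C \<Longrightarrow> realises (j \<in> N i) (p (Inr i)) (p (Inl j))"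
    and independent: "\<And>i i'. i \<in> I \<Longrightarrow> i' \<in> I \<Longrightarrow> i < i' \<Longrightarrow> realises False (p (Inr i)) (p (Inr i'))"
  shows "word_representable (split_graph C I N)"
proof -
  let ?E = "snd (split_graph C I N)"
  define vs where "vs = map Inl (sorted_list_of_set C) @ map Inr (sorted_list_of_set I)"
  have vs: "distinct vs" "set vs = Inl ` C \<union> Inr ` I"
    unfolding vs_def using assms(1,2) by (auto simp: distinct_map)
  have realised: "realises (?E x y) (p x) (p y)" if "x \<in> set vs" "y \<in> set vs" "x \<noteq> y" for x y
  proof (cases x; cases y)
    fix j j' assume "x = Inl j" "y = Inl j'"
    then show ?thesis
      using that clique[of j j'] clique[of j' j] realises_commute unfolding vs(2)
      by (auto simp: neq_iff)
  next
    fix i j assume "x = Inr i" "y = Inl j"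
    then show ?thesis
      using that cross unfolding vs(2) by auto
  next
    fix j i assume "x = Inl j" "y = Inr i"
    then show ?thesis
      using that cross[of i j] realises_commute unfolding vs(2) by auto
  next
    fix i i' assume "x = Inr i" "y = Inr i'"
    then show ?thesis
      using that independent[of i i'] independent[of i' i] realises_commute unfolding vs(2)
      by (auto simp: neq_iff)
  qed
  have "word_representable (set vs, ?E)"
  proof (rule word_representable_of_placement[OF vs(1)])
    show "\<forall>v\<in>set vs. p v 0 < p v 1 \<and> p v 1 < p v 2"
      using increasing unfolding vs(2) by blast
  qed (use realised in blast)
  then show ?thesis
    using vs(2) by (metis split_graph_simps(1) prod.collapse)
qed

section \<open>Representations of F_0, the even suns, F_1 and F_2\<close>

definition triple :: "int \<Rightarrow> int \<Rightarrow> int \<Rightarrow> nat \<Rightarrow> int" where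
  "triple a b c t = (if t = 0 then a else if t = 1 then b else c)"

lemma triple_simps [simp]:
  "triple a b c 0 = a" "triple a b c 1 = b" "triple a b c (Suc 0) = b" "triple a b c 2 = c"
  by (simp_all add: triple_def)

lemma realises_triple_iff:
  "realises e (triple a b c) (triple a' b' c') \<longleftrightarrow>
     a \<notin> {a', b', c'} \<and> b \<notin> {a', b', c'} \<and> c \<notin> {a', b', c'} \<and>
     (e \<longleftrightarrow> a < a' \<and> a' < b \<and> b < b' \<and> b' < c \<and> c < c' \<or> a' < a \<and> a < b' \<and> b' < b \<and> b < c' \<and> c' < c)"
  by (simp add: realises_def disjoint_positions_iff interleaved_def)

text \<open>Clique vertex c_j takes the j-th place in each of three rounds c_1 ... c_k of period 4k.
  A path vertex a_i straddles c_i and c_(i+1) in two consecutive rounds, the first two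
  rounds for even i and the last two for odd i, so that consecutive path vertices do not
  interleave.\<close>
definition clique_pos :: "nat \<Rightarrow> nat \<Rightarrow> nat \<Rightarrow> int" where
  "clique_pos k j = triple (4 * int j) (4 * int k + 4 * int j) (8 * int k + 4 * int j)"

definition path_pos :: "nat \<Rightarrow> nat \<Rightarrow> nat \<Rightarrow> int" where
  "path_pos k i =
    (if odd i
     then triple (4 * int k + 4 * int i - 1) (4 * int k + 4 * int i + 5) (8 * int k + 4 * int i + 5)
     else triple (4 * int i - 1) (4 * int i + 5) (4 * int k + 4 * int i + 5))"

lemma clique_pos_realises:
  "1 \<le> j \<Longrightarrow> j < j' \<Longrightarrow> j' \<le> k \<Longrightarrow> realises True (clique_pos k j) (clique_pos k j')"
  unfolding clique_pos_def realises_triple_iff by simp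

lemma path_pos_clique_pos_realises:
  "1 \<le> i \<Longrightarrow> i < k \<Longrightarrow> 1 \<le> j \<Longrightarrow> j \<le> k \<Longrightarrow>
    realises (j = i \<or> j = i + 1) (path_pos k i) (clique_pos k j)"
  unfolding path_pos_def clique_pos_def by (simp add: realises_triple_iff; arith)

lemma path_pos_realises:
  assumes "1 \<le> i" "i < i'" "i' < k"
  shows "realises False (path_pos k i) (path_pos k i')"
proof (cases "odd i = odd i'")
  case True
  then have "i + 2 \<le> i'"
    using assms(2) by presburger
  then show ?thesis
    using assms True unfolding path_pos_def by (simp add: realises_triple_iff; arith)
next
  case False
  then show ?thesis
    using assms unfolding path_pos_def by (simp add: realises_triple_iff; arith)
qed

definition sun_closing_pos :: "nat \<Rightarrow> nat \<Rightarrow> int" where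
  "sun_closing_pos k = triple 5 (4 * int k + 5) (12 * int k - 1)"

lemma sun_closing_pos_clique_pos_realises:
  "3 \<le> k \<Longrightarrow> 1 \<le> j \<Longrightarrow> j \<le> k \<Longrightarrow> realises (j = 1 \<or> j = k) (sun_closing_pos k) (clique_pos k j)"
  unfolding sun_closing_pos_def clique_pos_def by (simp add: realises_triple_iff; arith)

lemma sun_closing_pos_path_pos_realises:
  "3 \<le> k \<Longrightarrow> 1 \<le> i \<Longrightarrow> i < k \<Longrightarrow> realises False (path_pos k i) (sun_closing_pos k)"
  unfolding sun_closing_pos_def path_pos_def by (simp add: realises_triple_iff; arith)

lemma word_representable_even_sun:
  assumes "k \<ge> 3"
  shows "word_representable (even_sun k)"
  unfolding even_sun_def
proof (rule word_representable_split_graph_by_placement)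
  let ?p = "\<lambda>v. case v of Inl j \<Rightarrow> clique_pos k j
    | Inr i \<Rightarrow> if i = k then sun_closing_pos k else path_pos k i"
  show "?p v 0 < ?p v 1 \<and> ?p v 1 < ?p v 2" if "v \<in> Inl ` {1..k} \<union> Inr ` {1..k}" for v
    using that assms by (auto simp: clique_pos_def path_pos_def sun_closing_pos_def)
  show "realises True (?p (Inl j)) (?p (Inl j'))" if "j \<in> {1..k}" "j' \<in> {1..k}" "j < j'" for j j'
    using that clique_pos_realises by simp
  show "realises (j \<in> sun_nbr k i) (?p (Inr i)) (?p (Inl j))" if "i \<in> {1..k}" "j \<in> {1..k}" for i j
    using that assms sun_closing_pos_clique_pos_realises path_pos_clique_pos_realises
    by (auto simp: sun_nbr_def)
  show "realises False (?p (Inr i)) (?p (Inr i'))" if "i \<in> {1..k}" "i' \<in> {1..k}" "i < i'" for i i'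
    using that assms sun_closing_pos_path_pos_realises path_pos_realises by auto
qed (simp_all)

definition F2_hub_pos :: "nat \<Rightarrow> nat \<Rightarrow> int" where
  "F2_hub_pos k = triple 6 (4 * int k - 3) (8 * int k + 5)"

lemma F2_hub_pos_clique_pos_realises:
  "5 \<le> k \<Longrightarrow> 1 \<le> j \<Longrightarrow> j \<le> k \<Longrightarrow> realises (2 \<le> j \<and> j \<le> k - 1) (F2_hub_pos k) (clique_pos k j)"
  unfolding F2_hub_pos_def clique_pos_def by (simp add: realises_triple_iff; arith)

lemma F2_hub_pos_path_pos_realises:
  assumes "5 \<le> k" "odd k" "1 \<le> i" "i < k"
  shows "realises False (path_pos k i) (F2_hub_pos k)"
proof -
  have "even i \<Longrightarrow> i + 2 \<noteq> k"
    using assms(2) by presburger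
  then show ?thesis
    using assms unfolding F2_hub_pos_def path_pos_def by (simp add: realises_triple_iff; arith)
qed

lemma word_representable_F2:
  assumes "k \<ge> 5" "odd k"
  shows "word_representable (F2 k)"
  unfolding F2_def
proof (rule word_representable_split_graph_by_placement)
  let ?p = "\<lambda>v. case v of Inl j \<Rightarrow> clique_pos k j
    | Inr i \<Rightarrow> if i = k then F2_hub_pos k else path_pos k i"
  show "?p v 0 < ?p v 1 \<and> ?p v 1 < ?p v 2" if "v \<in> Inl ` {1..k} \<union> Inr ` {1..k}" for v
    using that assms by (auto simp: clique_pos_def path_pos_def F2_hub_pos_def)
  show "realises True (?p (Inl j)) (?p (Inl j'))" if "j \<in> {1..k}" "j' \<in> {1..k}" "j < j'" for j j'
    using that clique_pos_realises by simp
  show "realises (j \<in> (if i \<le> k - 1 then {i, i + 1} else {2..k - 1})) (?p (Inr i)) (?p (Inl j))"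
    if "i \<in> {1..k}" "j \<in> {1..k}" for i j
    using that assms F2_hub_pos_clique_pos_realises path_pos_clique_pos_realises by auto
  show "realises False (?p (Inr i)) (?p (Inr i'))" if "i \<in> {1..k}" "i' \<in> {1..k}" "i < i'" for i i'
    using that assms F2_hub_pos_path_pos_realises path_pos_realises by auto
qed (simp_all)

definition F1_first_pos :: "nat \<Rightarrow> nat \<Rightarrow> int" where
  "F1_first_pos n = triple (4 * int n + 3) (4 * int n + 9) (12 * int n + 8)"

definition F1_left_pos :: "nat \<Rightarrow> nat \<Rightarrow> int" where
  "F1_left_pos n = triple 3 (4 * int n - 2) (8 * int n + 3)"

definition F1_right_pos :: "nat \<Rightarrow> nat \<Rightarrow> int" where
  "F1_right_pos n = triple (4 * int n + 7) (8 * int n + 2) (12 * int n + 4)"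

lemmas F1_pos_defs = F1_first_pos_def F1_left_pos_def F1_right_pos_def clique_pos_def path_pos_def

lemma F1_pos_clique_pos_realises:
  assumes "4 \<le> n" "1 \<le> j" "j \<le> n"
  shows "realises (j = 1 \<or> j = 2) (F1_first_pos n) (clique_pos n j)"
    and "realises (j \<le> n - 1) (F1_left_pos n) (clique_pos n j)"
    and "realises (2 \<le> j) (F1_right_pos n) (clique_pos n j)"
  using assms unfolding F1_pos_defs by (simp_all add: realises_triple_iff; arith)+

lemma F1_pos_path_pos_realises:
  assumes "4 \<le> n" "2 \<le> i" "i < n"
  shows "realises False (F1_first_pos n) (path_pos n i)"
    and "realises False (path_pos n i) (F1_left_pos n)"
    and "realises False (path_pos n i) (F1_right_pos n)"
proof -
  have "odd i \<Longrightarrow> 3 \<le> i"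
    using assms(2) by presburger
  then show "realises False (F1_first_pos n) (path_pos n i)"
    and "realises False (path_pos n i) (F1_left_pos n)"
    and "realises False (path_pos n i) (F1_right_pos n)"
    using assms unfolding F1_pos_defs by (simp_all add: realises_triple_iff; arith)+
qed

lemma F1_pos_realises:
  assumes "4 \<le> n"
  shows "realises False (F1_first_pos n) (F1_left_pos n)"
    and "realises False (F1_first_pos n) (F1_right_pos n)"
    and "realises False (F1_left_pos n) (F1_right_pos n)"
  using assms unfolding F1_pos_defs by (simp_all add: realises_triple_iff)

lemma word_representable_F1:
  assumes "k \<ge> 5"
  shows "word_representable (F1 k)"
proof -
  define n where "n = k - 1"
  have n: "k = n + 1" "n \<ge> 4"
    using assms unfolding n_def by simp_all
  have "word_representable (split_graph {1..n} {1..n + 1}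
     (\<lambda>i. if i \<le> n - 1 then {i, i + 1} else if i = n then {1..n - 1} else {2..n}))"
  proof (rule word_representable_split_graph_by_placement)
    let ?p = "\<lambda>v. case v of Inl j \<Rightarrow> clique_pos n j
      | Inr i \<Rightarrow> if i = 1 then F1_first_pos n else if i = n then F1_left_pos n
                else if i = n + 1 then F1_right_pos n else path_pos n i"
    show "?p v 0 < ?p v 1 \<and> ?p v 1 < ?p v 2" if "v \<in> Inl ` {1..n} \<union> Inr ` {1..n + 1}" for v
      using that n by (auto simp: F1_pos_defs)
    show "realises True (?p (Inl j)) (?p (Inl j'))" if "j \<in> {1..n}" "j' \<in> {1..n}" "j < j'" for j j'
      using that clique_pos_realises by simp
    show "realises (j \<in> (if i \<le> n - 1 then {i, i + 1} else if i = n then {1..n - 1} else {2..n}))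
        (?p (Inr i)) (?p (Inl j))" if "i \<in> {1..n + 1}" "j \<in> {1..n}" for i j
    proof -
      have "i = 1 \<or> i = n \<or> i = n + 1 \<or> 2 \<le> i \<and> i < n"
        using that by auto
      then show ?thesis
        using that n(2) F1_pos_clique_pos_realises[OF n(2)] path_pos_clique_pos_realises[of i n j]
        by (elim disjE conjE) (auto simp: numeral_2_eq_2)
    qed
    show "realises False (?p (Inr i)) (?p (Inr i'))"
      if "i \<in> {1..n + 1}" "i' \<in> {1..n + 1}" "i < i'" for i i'
    proof -
      have i: "i = 1 \<or> i = n \<or> 2 \<le> i \<and> i < n" and i': "i' = n + 1 \<or> i' = n \<or> 2 \<le> i' \<and> i' < n"
        using that by auto
      show ?thesis
        using i i' that n(2) F1_pos_path_pos_realises[OF n(2)] F1_pos_realises[OF n(2)]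
          path_pos_realises
        by (elim disjE conjE) simp_all
    qed
  qed (simp_all)
  moreover have "k - 1 = n" "k - 2 = n - 1"
    using n by simp_all
  ultimately show ?thesis
    unfolding F1_def by (simp only: n(1))
qed

definition F0_placement :: "(nat + nat) placement" where
  "F0_placement v = (case v of
       Inl j \<Rightarrow> (if j = 0 then triple 0 8 16 else if j = 1 then triple 5 12 21
         else if j = 2 then triple 2 11 20 else if j = 3 then triple 1 10 17 else triple 7 14 22)
     | Inr i \<Rightarrow> (if i = 1 then triple 3 15 23 else if i = 2 then triple 6 13 18 else triple 4 9 19))"

lemma word_representable_F0: "word_representable F0"
  unfolding F0_def
proof (rule word_representable_split_graph_by_placement[where p = F0_placement])
  have C: "j \<in> {0..4} \<longleftrightarrow> j = 0 \<or> j = 1 \<or> j = 2 \<or> j = 3 \<or> j = 4"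
    and I: "i \<in> {1..3} \<longleftrightarrow> i = 1 \<or> i = 2 \<or> i = 3" for i j :: nat
    by auto
  show "F0_placement v 0 < F0_placement v 1 \<and> F0_placement v 1 < F0_placement v 2"
    if "v \<in> Inl ` {0..4} \<union> Inr ` {1..3}" for v
    using that unfolding C I by (auto simp: F0_placement_def)
  show "realises True (F0_placement (Inl j)) (F0_placement (Inl j'))"
    if "j \<in> {0..4}" "j' \<in> {0..4}" "j < j'" for j j'
    using that unfolding C by (elim disjE) (simp_all add: F0_placement_def realises_triple_iff)
  show "realises (j \<in> (if i = 1 then {0, 2, 3} else if i = 2 then {0, 3, 4} else {0, 1, 4}))
      (F0_placement (Inr i)) (F0_placement (Inl j))" if "i \<in> {1..3}" "j \<in> {0..4}" for i j
    using that unfolding C I by (elim disjE) (simp_all add: F0_placement_def realises_triple_iff)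
  show "realises False (F0_placement (Inr i)) (F0_placement (Inr i'))"
    if "i \<in> {1..3}" "i' \<in> {1..3}" "i < i'" for i i'
    using that unfolding I by (elim disjE) (simp_all add: F0_placement_def realises_triple_iff)
qed (simp_all)

section \<open>Ranking the clique of a represented split graph\<close>

locale split_representant =
  fixes C I :: "nat set" and N :: "nat \<Rightarrow> nat set" and w :: "(nat + nat) list"
  assumes finite_clique: "finite C"
    and neighbours_in_clique: "\<And>i. i \<in> I \<Longrightarrow> N i \<subseteq> C"
    and set_word: "set w = Inl ` C \<union> Inr ` I"
    and represents: "\<And>a b. a \<in> set w \<Longrightarrow> b \<in> set w \<Longrightarrow> a \<noteq> b \<Longrightarrow>
        (snd (split_graph C I N) a b \<longleftrightarrow> alternate w a b)"

lemma split_representantE: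
  assumes "word_representable (split_graph C I N)" "finite C" "\<And>i. i \<in> I \<Longrightarrow> N i \<subseteq> C"
  obtains w where "split_representant C I N w"
proof -
  obtain w where "set w = Inl ` C \<union> Inr ` I"
    "\<forall>a\<in>set w. \<forall>b\<in>set w. a \<noteq> b \<longrightarrow> (snd (split_graph C I N) a b \<longleftrightarrow> alternate w a b)"
    using assms(1) unfolding word_representable_def by auto
  then have "split_representant C I N w"
    using assms(2,3) by unfold_locales auto
  then show ?thesis ..
qed

context split_representant
begin

lemma adjacent_iff_leads:
  assumes "a \<in> Inl ` C \<union> Inr ` I" "b \<in> Inl ` C \<union> Inr ` I" "a \<noteq> b"
  shows "snd (split_graph C I N) a b \<longleftrightarrow> leads w a b \<or> leads w b a"
  using represents[of a b] alternate_iff_leads[OF assms(3)] assms set_word by simp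

lemma neighbour_in_clique: "i \<in> I \<Longrightarrow> c \<in> N i \<Longrightarrow> c \<in> C"
  using neighbours_in_clique by blast

lemma clique_leads:
  "c \<in> C \<Longrightarrow> d \<in> C \<Longrightarrow> c \<noteq> d \<Longrightarrow> leads w (Inl c) (Inl d) \<or> leads w (Inl d) (Inl c)"
  using adjacent_iff_leads[of "Inl c" "Inl d"] by simp

lemma neighbour_leads:
  "i \<in> I \<Longrightarrow> c \<in> N i \<Longrightarrow> leads w (Inl c) (Inr i) \<or> leads w (Inr i) (Inl c)"
  using adjacent_iff_leads[of "Inl c" "Inr i"] neighbour_in_clique by simp

lemma non_neighbour_not_leads:
  "i \<in> I \<Longrightarrow> c \<in> C \<Longrightarrow> c \<notin> N i \<Longrightarrow> \<not> leads w (Inl c) (Inr i) \<and> \<not> leads w (Inr i) (Inl c)"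
  using adjacent_iff_leads[of "Inl c" "Inr i"] by simp

lemma independent_not_leads:
  "i \<in> I \<Longrightarrow> i' \<in> I \<Longrightarrow> i \<noteq> i' \<Longrightarrow> \<not> leads w (Inr i) (Inr i')"
  using adjacent_iff_leads[of "Inr i" "Inr i'"] by simp

lemma leads_antisym_clique:
  "c \<in> C \<Longrightarrow> x \<noteq> Inl c \<Longrightarrow> leads w (Inl c) x \<Longrightarrow> \<not> leads w x (Inl c)"
  using leads_antisym[of "Inl c" w x] set_word by blast

lemma clique_leads_trans:
  assumes "c \<in> C" "d \<in> C" "e \<in> C" "leads w (Inl c) (Inl d)" "leads w (Inl d) (Inl e)"
  shows "leads w (Inl c) (Inl e)"
  using leads_trans[OF assms(4,5)] clique_leads[OF assms(1,3)] leads_refl by (cases "c = e") auto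

definition rank :: "nat \<Rightarrow> nat" where
  "rank c = card {d \<in> C. d \<noteq> c \<and> leads w (Inl d) (Inl c)}"

abbreviation n where "n \<equiv> card C"

lemma rank_less_rank:
  assumes "c \<in> C" "d \<in> C" "c \<noteq> d" "leads w (Inl c) (Inl d)"
  shows "rank c < rank d"
proof -
  have "{e \<in> C. e \<noteq> c \<and> leads w (Inl e) (Inl c)} \<subseteq> {e \<in> C. e \<noteq> d \<and> leads w (Inl e) (Inl d)}"
    using assms leads_antisym_clique clique_leads_trans by blast
  moreover have "c \<in> {e \<in> C. e \<noteq> d \<and> leads w (Inl e) (Inl d)}"
    using assms by simp
  ultimately have
    "{e \<in> C. e \<noteq> c \<and> leads w (Inl e) (Inl c)} \<subset> {e \<in> C. e \<noteq> d \<and> leads w (Inl e) (Inl d)}"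
    by blast
  then show ?thesis
    unfolding rank_def by (rule psubset_card_mono[rotated]) (simp add: finite_clique)
qed

lemma leads_iff_rank_less:
  assumes "c \<in> C" "d \<in> C" "c \<noteq> d"
  shows "leads w (Inl c) (Inl d) \<longleftrightarrow> rank c < rank d"
  using rank_less_rank[OF assms] rank_less_rank[OF assms(2,1) assms(3)[symmetric]]
    clique_leads[OF assms]
  by auto

lemma rank_less_card: "c \<in> C \<Longrightarrow> rank c < n"
  unfolding rank_def by (rule psubset_card_mono) (auto simp: finite_clique)

lemma inj_on_rank: "inj_on rank C"
  by (rule inj_onI) (metis leads_iff_rank_less less_irrefl clique_leads)

lemma bij_betw_rank: "bij_betw rank C {..<n}"
proof -
  have "rank ` C \<subseteq> {..<n}" "card (rank ` C) = n"
    using rank_less_card card_image[OF inj_on_rank] by auto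
  then have "rank ` C = {..<n}"
    by (simp add: card_subset_eq)
  then show ?thesis
    using inj_on_rank by (simp add: bij_betw_def)
qed

definition vertex_of_rank :: "nat \<Rightarrow> nat" where
  "vertex_of_rank = the_inv_into C rank"

lemma vertex_of_rank: "t < n \<Longrightarrow> vertex_of_rank t \<in> C \<and> rank (vertex_of_rank t) = t"
  unfolding vertex_of_rank_def
  using bij_betw_the_inv_into[OF bij_betw_rank] f_the_inv_into_f_bij_betw[OF bij_betw_rank]
  by (auto dest: bij_betwE)

lemma rank_vertex_of_rank [simp]: "t < n \<Longrightarrow> rank (vertex_of_rank t) = t"
  using vertex_of_rank by blast

lemma rank_eq_iff: "c \<in> C \<Longrightarrow> d \<in> C \<Longrightarrow> rank c = rank d \<longleftrightarrow> c = d"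
  using inj_on_rank by (auto dest: inj_onD)

lemma vertex_of_rank_rank: "c \<in> C \<Longrightarrow> vertex_of_rank (rank c) = c"
  using vertex_of_rank[OF rank_less_card] rank_eq_iff by blast

lemma vertex_of_rank_eq_iff: "t < n \<Longrightarrow> c \<in> C \<Longrightarrow> vertex_of_rank t = c \<longleftrightarrow> t = rank c"
  using vertex_of_rank_rank by auto

lemma straddle_neighbours_outside:
  assumes "i \<in> I" "u \<in> N i" "v \<in> N i" "leads w (Inl u) (Inr i)" "leads w (Inr i) (Inl v)"
    and "t \<in> C" "rank t < rank u \<or> rank v < rank t"
  shows "t \<in> N i"
proof (rule ccontr)
  assume t: "t \<notin> N i"
  have C: "u \<in> C" "v \<in> C"
    using assms(1-3) neighbour_in_clique by auto
  have "u \<noteq> v"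
    using leads_antisym_clique[OF C(1) _ assms(4)] assms(5) by auto
  then have uv: "leads w (Inl u) (Inl v)"
    using leads_trans[OF assms(4,5)] clique_leads[OF C] by blast
  from assms(7) show False
  proof
    assume "rank t < rank u"
    then have "leads w (Inl t) (Inl u)" "leads w (Inl t) (Inl v)"
      using leads_iff_rank_less C assms(6) uv clique_leads_trans by (metis less_irrefl)+
    then have "leads w (Inl t) (Inr i)"
      using leads_chain[OF _ assms(4,5)] by blast
    then show False
      using non_neighbour_not_leads[OF assms(1,6) t] by blast
  next
    assume "rank v < rank t"
    then have "leads w (Inl v) (Inl t)" "leads w (Inl u) (Inl t)"
      using leads_iff_rank_less C assms(6) uv clique_leads_trans by (metis less_irrefl)+
    then have "leads w (Inr i) (Inl t)"
      using leads_chain[OF assms(4,5)] by blast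
    then show False
      using non_neighbour_not_leads[OF assms(1,6) t] by blast
  qed
qed

lemma gap_straddled:
  assumes "i \<in> I" "u \<in> N i" "v \<in> N i" "z \<in> C" "z \<notin> N i" "rank u < rank z" "rank z < rank v"
  shows "leads w (Inl u) (Inr i) \<and> leads w (Inr i) (Inl v)"
proof -
  have C: "u \<in> C" "v \<in> C"
    using assms(1-3) neighbour_in_clique by auto
  have uz: "leads w (Inl u) (Inl z)" and zv: "leads w (Inl z) (Inl v)"
    using leads_iff_rank_less C assms(4,6,7) by (metis less_irrefl)+
  have uv: "leads w (Inl u) (Inl v)" and "u \<noteq> v"
    using clique_leads_trans[OF C(1) assms(4) C(2) uz zv] assms(6,7) by auto
  have z: "\<not> leads w (Inl z) (Inr i)" "\<not> leads w (Inr i) (Inl z)"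
    using non_neighbour_not_leads[OF assms(1,4,5)] by auto
  consider "leads w (Inl u) (Inr i)" "leads w (Inr i) (Inl v)"
    | "leads w (Inr i) (Inl u)" "leads w (Inr i) (Inl v)"
    | "leads w (Inl u) (Inr i)" "leads w (Inl v) (Inr i)"
    | "leads w (Inr i) (Inl u)" "leads w (Inl v) (Inr i)"
    using neighbour_leads[OF assms(1,2)] neighbour_leads[OF assms(1,3)] by blast
  then show ?thesis
  proof cases
    case 2
    then show ?thesis using leads_chain[OF 2(1) uz zv 2(2)] z by blast
  next
    case 3
    then show ?thesis using leads_chain[OF uz zv 3(2) 3(1)] z by blast
  next
    case 4
    then have "leads w (Inl v) (Inl u)"
      using leads_trans[OF 4(2) 4(1)] clique_leads[OF C \<open>u \<noteq> v\<close>] by blast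
    then show ?thesis
      using leads_antisym_clique[OF C(1) _ uv] \<open>u \<noteq> v\<close> by blast
  qed blast
qed

lemma gap_forces_outside:
  assumes "i \<in> I" "u \<in> N i" "v \<in> N i" "rank u < g" "g < rank v" "vertex_of_rank g \<notin> N i"
    and "t < n" "t < rank u \<or> rank v < t"
  shows "vertex_of_rank t \<in> N i"
proof -
  have "g < n"
    using assms(1,3,5) neighbour_in_clique rank_less_card by (meson order.strict_trans)
  then show ?thesis
    using straddle_neighbours_outside[OF assms(1-3)] gap_straddled[OF assms(1-3) _ assms(6)]
      vertex_of_rank assms(4,5,7,8) by simp
qed

lemma straddle_transfer:
  assumes "a \<in> I" "b \<in> I" "a \<noteq> b" "u \<in> N a" "v \<in> N a" "u \<in> N b" "v \<in> N b"
    and "leads w (Inl u) (Inr a)" "leads w (Inr a) (Inl v)"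
  shows "leads w (Inl u) (Inr b) \<and> leads w (Inr b) (Inl v)"
proof -
  have C: "u \<in> C" "v \<in> C"
    using assms(1,4,5) neighbour_in_clique by auto
  have "u \<noteq> v"
    using leads_antisym_clique[OF C(1) _ assms(8)] assms(9) by auto
  then have uv: "leads w (Inl u) (Inl v)"
    using leads_trans[OF assms(8,9)] clique_leads[OF C] by blast
  have ab: "\<not> leads w (Inr a) (Inr b)" "\<not> leads w (Inr b) (Inr a)"
    using independent_not_leads assms(1-3) by auto
  consider "leads w (Inl u) (Inr b)" "leads w (Inr b) (Inl v)"
    | "leads w (Inr b) (Inl u)" "leads w (Inr b) (Inl v)"
    | "leads w (Inl u) (Inr b)" "leads w (Inl v) (Inr b)"
    | "leads w (Inr b) (Inl u)" "leads w (Inl v) (Inr b)"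
    using neighbour_leads[OF assms(2,6)] neighbour_leads[OF assms(2,7)] by blast
  then show ?thesis
  proof cases
    case 2
    then show ?thesis using leads_chain[OF 2(1) assms(8,9) 2(2)] ab by blast
  next
    case 3
    then show ?thesis using leads_chain[OF assms(8,9) 3(2,1)] ab by blast
  next
    case 4
    then have "leads w (Inl v) (Inl u)"
      using leads_trans[OF 4(2,1)] clique_leads[OF C \<open>u \<noteq> v\<close>] by blast
    then show ?thesis
      using leads_antisym_clique[OF C(1) _ uv] \<open>u \<noteq> v\<close> by blast
  qed blast
qed

lemma gap_forces_outside_common:
  assumes "a \<in> I" "b \<in> I" "a \<noteq> b" "u \<in> N a" "v \<in> N a" "u \<in> N b" "v \<in> N b"
    and "rank u < g" "g < rank v" "vertex_of_rank g \<notin> N a"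
    and "t < n" "t < rank u \<or> rank v < t"
  shows "vertex_of_rank t \<in> N b"
proof -
  have "g < n"
    using assms(1,5,9) neighbour_in_clique rank_less_card by (meson order.strict_trans)
  then show ?thesis
    using straddle_neighbours_outside[OF assms(2,6,7)] straddle_transfer[OF assms(1-7)]
      gap_straddled[OF assms(1,4,5) _ assms(10)] vertex_of_rank assms(8,9,11,12) by simp
qed

definition cyc_adj :: "nat \<Rightarrow> nat \<Rightarrow> bool" where
  "cyc_adj x y \<longleftrightarrow> rank x + 1 = rank y \<or> rank y + 1 = rank x
     \<or> rank x = 0 \<and> rank y = n - 1 \<or> rank y = 0 \<and> rank x = n - 1"

lemma cyc_adj_commute: "cyc_adj x y \<longleftrightarrow> cyc_adj y x"
  unfolding cyc_adj_def by auto

lemma cyc_adj_at_most_two: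
  assumes "v \<in> C" "x \<in> C" "y \<in> C" "z \<in> C" "cyc_adj x v" "cyc_adj y v" "cyc_adj z v"
  shows "x = y \<or> y = z \<or> x = z"
proof -
  have "rank v < n" "rank x < n" "rank y < n" "rank z < n"
    using assms(1-4) rank_less_card by auto
  then have "rank x = rank y \<or> rank y = rank z \<or> rank x = rank z"
    using assms(5-7) unfolding cyc_adj_def by linarith
  then show ?thesis
    using rank_eq_iff assms(2-4) by blast
qed

lemma cyc_adj_parity:
  assumes "even n" "x \<in> C" "y \<in> C" "cyc_adj x y"
  shows "odd (rank x + rank y)"
proof -
  have "n > 0"
    using assms(2) rank_less_card by fastforce
  then show ?thesis
    using assms(1,4) unfolding cyc_adj_def by (auto; presburger)
qed

lemma no_cycle_avoiding_vertex:
  assumes "e \<in> C" "n \<ge> 2"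
    and two_neighbours: "\<And>v. v \<in> C \<Longrightarrow> v \<noteq> e \<Longrightarrow>
      \<exists>u u'. u \<in> C \<and> u' \<in> C \<and> u \<noteq> e \<and> u' \<noteq> e \<and> u \<noteq> u' \<and> cyc_adj u v \<and> cyc_adj u' v"
  shows False
proof -
  define v where "v = vertex_of_rank (if rank e + 1 = n then 0 else rank e + 1)"
  have "rank e < n"
    using assms(1) rank_less_card by blast
  then have v: "v \<in> C" "cyc_adj e v" "v \<noteq> e"
    using vertex_of_rank[of "if rank e + 1 = n then 0 else rank e + 1"] assms(2)
    unfolding v_def cyc_adj_def by (auto dest: arg_cong[of _ _ rank])
  then show False
    using two_neighbours[OF v(1,3)] cyc_adj_at_most_two[OF v(1) assms(1)] by blast
qed

lemma no_cycle_through_all_but_one: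
  assumes "m \<ge> 3" "C = insert e {1..m}" "e \<notin> {1..m}"
    and succ: "\<And>i. 1 \<le> i \<Longrightarrow> i < m \<Longrightarrow> cyc_adj i (i + 1)"
    and wrap: "cyc_adj 1 m"
  shows False
proof (rule no_cycle_avoiding_vertex)
  show "e \<in> C" "n \<ge> 2"
    using assms(1-3) by simp_all
  fix v assume v: "v \<in> C" "v \<noteq> e"
  then have "1 \<le> v" "v \<le> m"
    using assms(2) by auto
  then have "cyc_adj (if v = 1 then m else v - 1) v" "cyc_adj (if v = m then 1 else v + 1) v"
    using succ[of "v - 1"] succ[of v] wrap cyc_adj_commute by auto
  moreover have "(if v = 1 then m else v - 1) \<in> {1..m}" "(if v = m then 1 else v + 1) \<in> {1..m}"
    "(if v = 1 then m else v - 1) \<noteq> (if v = m then 1 else v + 1)"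
    using \<open>1 \<le> v\<close> \<open>v \<le> m\<close> assms(1) by auto
  ultimately show "\<exists>u u'. u \<in> C \<and> u' \<in> C \<and> u \<noteq> e \<and> u' \<noteq> e \<and> u \<noteq> u' \<and> cyc_adj u v \<and> cyc_adj u' v"
    using assms(2,3) by blast
qed

lemma two_neighbours_cyc_adj:
  assumes "i \<in> I" "N i = {x, y}" "x \<noteq> y" "n \<ge> 3"
  shows "cyc_adj x y"
proof -
  have sorted: "cyc_adj x y" if N: "N i = {x, y}" and lt: "rank x < rank y" for x y
  proof (rule ccontr)
    assume not_adj: "\<not> cyc_adj x y"
    have ranks: "t = rank x \<or> t = rank y" if "t < n" "vertex_of_rank t \<in> N i" for t
      using that N vertex_of_rank by auto
    have gap: "rank x < rank x + 1" "rank x + 1 < rank y"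
      using lt not_adj unfolding cyc_adj_def by auto
    moreover have "rank y < n"
      using assms(1) N neighbour_in_clique rank_less_card by simp
    ultimately have "vertex_of_rank (rank x + 1) \<notin> N i"
      using ranks[of "rank x + 1"] by auto
    then have outside: "vertex_of_rank t \<in> N i" if "t < n" "t < rank x \<or> rank y < t" for t
      using gap_forces_outside[OF assms(1) _ _ gap] that N by auto
    have "rank x = 0" "rank y = n - 1"
      using outside[of 0] ranks[of 0] outside[of "n - 1"] ranks[of "n - 1"] gap \<open>rank y < n\<close>
      by fastforce+
    then show False
      using not_adj unfolding cyc_adj_def by simp
  qed
  have "rank x \<noteq> rank y"
    using assms(1-3) neighbour_in_clique rank_eq_iff by simp
  then show ?thesis
    using sorted[of x y] sorted[of y x] assms(2) cyc_adj_commute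
    by (metis insert_commute nat_neq_iff)
qed

lemma all_but_two_neighbours_cyc_adj:
  assumes "i \<in> I" "x \<in> C" "y \<in> C" "x \<noteq> y" "N i = C - {x, y}"
  shows "cyc_adj x y"
proof -
  have sorted: "cyc_adj x y" if "x \<in> C" "y \<in> C" "N i = C - {x, y}" and lt: "rank x < rank y" for x y
  proof (rule ccontr)
    assume not_adj: "\<not> cyc_adj x y"
    have in_N: "vertex_of_rank t \<in> N i" if "t < n" "t \<noteq> rank x" "t \<noteq> rank y" for t
      using that vertex_of_rank \<open>N i = C - {x, y}\<close> by auto
    have x: "vertex_of_rank (rank x) \<notin> N i" and y: "vertex_of_rank (rank y) \<notin> N i"
      using that(1-3) vertex_of_rank_rank by auto
    have ry: "rank y < n"
      using that(2) rank_less_card by blast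
    have gap: "rank x + 1 < rank y" "\<not> (rank x = 0 \<and> rank y = n - 1)"
      using lt not_adj unfolding cyc_adj_def by auto
    then have z: "vertex_of_rank (rank x + 1) \<in> N i"
      using in_N ry by simp
    show False
    proof (cases "rank x = 0")
      case False
      then show False
        using gap_forces_outside[OF assms(1) in_N[of 0] z _ _ x ry] ry gap y by auto
    next
      case True
      then show False
        using gap_forces_outside[OF assms(1) z in_N[of "n - 1"] _ _ y, of "rank x"] ry gap x by auto
    qed
  qed
  have "rank x \<noteq> rank y"
    using assms(2-4) rank_eq_iff by simp
  then show ?thesis
    using sorted[of x y] sorted[of y x] assms(2,3,5) cyc_adj_commute
    by (metis insert_commute nat_neq_iff)
qed

lemma complementary_pair_cyc_adj:
  assumes "b \<in> I" "b' \<in> I" "b \<noteq> b'" "x \<in> C" "y \<in> C" "x \<noteq> y" "N b = C - {x}" "N b' = C - {y}"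
  shows "cyc_adj x y"
proof -
  have sorted: "cyc_adj x y"
    if "b \<in> I" "b' \<in> I" "b \<noteq> b'" "x \<in> C" "y \<in> C" "N b = C - {x}" "N b' = C - {y}"
      and lt: "rank x < rank y" for b b' x y
  proof (rule ccontr)
    assume not_adj: "\<not> cyc_adj x y"
    have in_N: "vertex_of_rank t \<in> N b \<and> vertex_of_rank t \<in> N b'"
      if "t < n" "t \<noteq> rank x" "t \<noteq> rank y" for t
      using that vertex_of_rank \<open>N b = C - {x}\<close> \<open>N b' = C - {y}\<close> by auto
    have x: "vertex_of_rank (rank x) \<notin> N b" and y: "vertex_of_rank (rank y) \<notin> N b'"
      using that(4-7) vertex_of_rank_rank by auto
    have ry: "rank y < n"
      using that(5) rank_less_card by blast
    have gap: "rank x + 1 < rank y" "\<not> (rank x = 0 \<and> rank y = n - 1)"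
      using lt not_adj unfolding cyc_adj_def by auto
    show False
    proof (cases "rank x = 0")
      case False
      have "vertex_of_rank 0 \<in> N b" "vertex_of_rank 0 \<in> N b'"
        "vertex_of_rank (rank x + 1) \<in> N b" "vertex_of_rank (rank x + 1) \<in> N b'"
        using in_N[of 0] in_N[of "rank x + 1"] ry gap False by auto
      then show False
        using gap_forces_outside_common[OF that(1-3),
            of "vertex_of_rank 0" "vertex_of_rank (rank x + 1)" "rank x" "rank y"]
          ry gap x y False by auto
    next
      case True
      have "vertex_of_rank (rank y - 1) \<in> N b" "vertex_of_rank (rank y - 1) \<in> N b'"
        "vertex_of_rank (n - 1) \<in> N b" "vertex_of_rank (n - 1) \<in> N b'"
        using in_N[of "rank y - 1"] in_N[of "n - 1"] ry gap True by auto
      then show False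
        using gap_forces_outside_common[OF that(2,1) that(3)[symmetric],
            of "vertex_of_rank (rank y - 1)" "vertex_of_rank (n - 1)" "rank y" 0]
          ry gap x y True by auto
    qed
  qed
  have "rank x \<noteq> rank y"
    using assms(4-6) rank_eq_iff by simp
  then show ?thesis
    using sorted[OF assms(1-5,7,8)] sorted[OF assms(2,1) assms(3)[symmetric] assms(5,4,8,7)]
      cyc_adj_commute by (metis nat_neq_iff)
qed

lemma three_neighbours_middle_sorted:
  assumes "i \<in> I" and N: "N i = {p, q, s}" and lt: "rank p < rank q" "rank q < rank s"
  shows "\<exists>m\<in>N i. \<forall>x\<in>N i. x \<noteq> m \<longrightarrow> cyc_adj m x"
proof -
  have ranks: "t = rank p \<or> t = rank q \<or> t = rank s" if "t < n" "vertex_of_rank t \<in> N i" for t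
    using that N vertex_of_rank by auto
  have rs: "rank s < n"
    using assms(1) N neighbour_in_clique rank_less_card by simp
  consider "rank q = rank p + 1" "rank s = rank q + 1" | "rank p + 1 < rank q"
    | "rank q = rank p + 1" "rank q + 1 < rank s"
    using lt by linarith
  then show ?thesis
  proof cases
    case 1
    then show ?thesis
      using N unfolding cyc_adj_def by auto
  next
    case 2
    then have "vertex_of_rank (rank p + 1) \<notin> N i"
      using ranks[of "rank p + 1"] lt rs by auto
    then have outside: "vertex_of_rank t \<in> N i" if "t < n" "t < rank p \<or> rank q < t" for t
      using gap_forces_outside[OF assms(1), of p q "rank p + 1"] that 2 N by auto
    have "rank q < n - 1" "rank q + 1 < n"
      using lt rs by auto
    then have "rank p = 0" "rank s = n - 1" "rank s = rank q + 1"
      using outside[of 0] ranks[of 0] outside[of "n - 1"] ranks[of "n - 1"]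
        outside[of "rank q + 1"] ranks[of "rank q + 1"] lt by auto
    then show ?thesis
      using N unfolding cyc_adj_def by auto
  next
    case 3
    then have "vertex_of_rank (rank q + 1) \<notin> N i"
      using ranks[of "rank q + 1"] lt rs by auto
    then have outside: "vertex_of_rank t \<in> N i" if "t < n" "t < rank q \<or> rank s < t" for t
      using gap_forces_outside[OF assms(1), of q s "rank q + 1"] that 3 N by auto
    have "rank p = 0" "rank s = n - 1"
      using outside[of 0] ranks[of 0] outside[of "n - 1"] ranks[of "n - 1"] lt rs
      by (auto, cases "rank s < n - 1") auto
    then show ?thesis
      using N 3 unfolding cyc_adj_def by auto
  qed
qed

lemma three_neighbours_middle:
  assumes "i \<in> I" "N i = {p, q, s}" "p \<noteq> q" "q \<noteq> s" "p \<noteq> s"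
  shows "\<exists>m\<in>N i. \<forall>x\<in>N i. x \<noteq> m \<longrightarrow> cyc_adj m x"
proof -
  have "rank p \<noteq> rank q" "rank q \<noteq> rank s" "rank p \<noteq> rank s"
    using assms neighbour_in_clique rank_eq_iff by auto
  then consider "rank p < rank q" "rank q < rank s" | "rank p < rank s" "rank s < rank q"
    | "rank q < rank p" "rank p < rank s" | "rank q < rank s" "rank s < rank p"
    | "rank s < rank p" "rank p < rank q" | "rank s < rank q" "rank q < rank p"
    by linarith
  moreover have "N i = {p, q, s}" "N i = {p, s, q}" "N i = {q, p, s}" "N i = {q, s, p}"
    "N i = {s, p, q}" "N i = {s, q, p}"
    using assms(2) by auto
  ultimately show ?thesis
    using three_neighbours_middle_sorted[OF assms(1)] by metis
qed

lemma cycle_path_neighbourhood_sorted: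
  assumes "a \<in> I" "b \<in> I" "a \<noteq> b" and Na: "N a = {u, z, v}" and Nb: "u \<in> N b" "v \<in> N b" "z \<notin> N b"
    and adj: "cyc_adj z u" "cyc_adj z v" and lt: "rank u < rank v" and "n \<ge> 4"
  shows False
proof -
  have C: "u \<in> C" "z \<in> C" "v \<in> C"
    using assms(1) Na neighbour_in_clique by auto
  have ranks: "rank u < n" "rank z < n" "rank v < n" "rank z \<noteq> rank u" "rank z \<noteq> rank v"
    using C rank_less_card adj assms(11) unfolding cyc_adj_def by auto
  have in_Na: "t = rank u \<or> t = rank z \<or> t = rank v" if "t < n" "vertex_of_rank t \<in> N a" for t
    using that Na C vertex_of_rank_eq_iff[of t] by auto
  have z: "vertex_of_rank (rank z) \<notin> N b"
    using vertex_of_rank_rank[OF C(2)] Nb(3) by simp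
  have uv: "u \<in> N a" "v \<in> N a"
    using Na by simp_all
  consider "rank u + 1 = rank z" "rank z + 1 = rank v" | "rank z = 0" "rank u = 1" "rank v = n - 1"
    | "rank z = n - 1" "rank u = 0" "rank v = n - 2"
    using adj lt ranks unfolding cyc_adj_def by linarith
  then show False
  proof cases
    case 1
    define t where "t = (if rank z \<ge> 2 then 0 else n - 1)"
    have t: "t < n" "t < rank u \<or> rank v < t" "t \<noteq> rank u" "t \<noteq> rank z" "t \<noteq> rank v"
      using 1 ranks \<open>n \<ge> 4\<close> unfolding t_def by auto
    then have "vertex_of_rank t \<in> N a"
      using gap_forces_outside_common[OF assms(2,1) assms(3)[symmetric] Nb(1,2) uv _ _ z] 1 by simp
    then show False
      using in_Na[of t] t by simp
  next
    case 2
    then have "vertex_of_rank 2 \<notin> N a"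
      using in_Na[of 2] \<open>n \<ge> 4\<close> by auto
    then show False
      using gap_forces_outside_common[OF assms(1-3) uv Nb(1,2), of 2 0] z 2 \<open>n \<ge> 4\<close> by simp
  next
    case 3
    then have "vertex_of_rank 1 \<notin> N a"
      using in_Na[of 1] \<open>n \<ge> 4\<close> by auto
    then show False
      using gap_forces_outside_common[OF assms(1-3) uv Nb(1,2), of 1 "n - 1"] z 3 \<open>n \<ge> 4\<close> by simp
  qed
qed

lemma cycle_path_neighbourhood_not_nested:
  assumes "a \<in> I" "b \<in> I" "a \<noteq> b" "N a = {u, z, v}" "u \<in> N b" "v \<in> N b" "z \<notin> N b"
    and "cyc_adj z u" "cyc_adj z v" "u \<noteq> v" "n \<ge> 4"
  shows False
proof -
  have "rank u \<noteq> rank v"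
    using assms(1,4,10) neighbour_in_clique rank_eq_iff by simp
  then consider "rank u < rank v" | "rank v < rank u"
    by linarith
  then show False
  proof cases
    case 1
    then show False
      using cycle_path_neighbourhood_sorted[OF assms(1-9) _ assms(11)] by blast
  next
    case 2
    have "N a = {v, z, u}"
      using assms(4) by auto
    then show False
      using cycle_path_neighbourhood_sorted[OF assms(1-3) _ assms(6,5,7,9,8) 2 assms(11)] by blast
  qed
qed

end

section \<open>The non-representable graphs\<close>

lemma odd_sun_center_not_word_representable:
  assumes "k \<ge> 3"
  shows "\<not> word_representable (odd_sun_center k)"
proof
  assume "word_representable (odd_sun_center k)"
  then obtain w where "split_representant {0..k} {1..k} (sun_nbr k) w"
    unfolding odd_sun_center_def by (rule split_representantE) (auto simp: sun_nbr_def)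
  then interpret split_representant "{0..k}" "{1..k}" "sun_nbr k" w .
  show False
  proof (rule no_cycle_through_all_but_one[OF assms, of 0])
    show "cyc_adj i (i + 1)" if "1 \<le> i" "i < k" for i
      using two_neighbours_cyc_adj[of i i "i + 1"] that assms by (simp add: sun_nbr_def)
    show "cyc_adj 1 k"
      using two_neighbours_cyc_adj[of k 1 k] assms by (simp add: sun_nbr_def)
  qed auto
qed

lemma M_III_not_word_representable:
  assumes "k \<ge> 4"
  shows "\<not> word_representable (M_III k)"
proof
  define N where "N i = (if i \<le> k - 1 then {i, i + 1} else {2..k - 1} \<union> {k + 1})" for i
  assume "word_representable (M_III k)"
  then obtain w where "split_representant {1..k + 1} {1..k} N w"
    unfolding M_III_def N_def[abs_def] by (rule split_representantE) auto
  then interpret split_representant "{1..k + 1}" "{1..k}" N w .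
  show False
  proof (rule no_cycle_through_all_but_one[of k "k + 1"])
    show "cyc_adj i (i + 1)" if "1 \<le> i" "i < k" for i
      using two_neighbours_cyc_adj[of i i "i + 1"] that assms by (simp add: N_def)
    have "N k = {1..k + 1} - {1, k}"
      using assms by (auto simp: N_def)
    then show "cyc_adj 1 k"
      using all_but_two_neighbours_cyc_adj[of k 1 k] assms by simp
  qed (use assms in auto)
qed

lemma M_II_not_word_representable:
  assumes "k \<ge> 4"
  shows "\<not> word_representable (M_II k)"
proof
  define N where
    "N i = (if i \<le> k - 2 then {i, i + 1} else if i = k - 1 then {1..k - 2} \<union> {k} else {2..k})" for i
  assume "word_representable (M_II k)"
  then obtain w where "split_representant {1..k} {1..k} N w"
    unfolding M_II_def N_def[abs_def] by (rule split_representantE) auto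
  then interpret split_representant "{1..k}" "{1..k}" N w .
  show False
  proof (rule no_cycle_through_all_but_one[of "k - 1" k])
    show "cyc_adj i (i + 1)" if "1 \<le> i" "i < k - 1" for i
      using two_neighbours_cyc_adj[of i i "i + 1"] that assms by (simp add: N_def)
    have "N (k - 1) = {1..k} - {k - 1}" "N k = {1..k} - {1}"
      using assms by (auto simp: N_def)
    then show "cyc_adj 1 (k - 1)"
      using complementary_pair_cyc_adj[of "k - 1" k "k - 1" 1] assms cyc_adj_commute by simp
  qed (use assms in auto)
qed

lemma K1_tent_not_word_representable: "\<not> word_representable K1_tent"
proof
  define N :: "nat \<Rightarrow> nat set"
    where "N i = (if i = 1 then {1, 2, 4} else if i = 2 then {2, 3, 4} else {1, 3, 4})" for i
  assume "word_representable K1_tent"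
  then obtain w where "split_representant {1..4} {1..3} N w"
    unfolding K1_tent_def N_def[abs_def] by (rule split_representantE) auto
  then interpret split_representant "{1..4}" "{1..3}" N w .
  have "N 1 = {1..4} - {3}" "N 2 = {1..4} - {1}" "N 3 = {1..4} - {2}"
    by (auto simp: N_def)
  then have "cyc_adj 3 1" "cyc_adj 1 2" "cyc_adj 2 3"
    using complementary_pair_cyc_adj[of 1 2 3 1] complementary_pair_cyc_adj[of 2 3 1 2]
      complementary_pair_cyc_adj[of 3 1 2 3] by simp_all
  then have "odd (rank 3 + rank 1)" "odd (rank 1 + rank 2)" "odd (rank 2 + rank 3)"
    using cyc_adj_parity by simp_all
  then show False
    by presburger
qed

lemma M_III3_not_word_representable: "\<not> word_representable M_III3"
proof
  assume "word_representable M_III3"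
  then obtain w where "split_representant {1..4} {1..3} (\<lambda>i. {i, 4}) w"
    unfolding M_III3_def by (rule split_representantE) auto
  then interpret split_representant "{1..4}" "{1..3}" "\<lambda>i. {i, 4}" w .
  have "cyc_adj i 4" if "i \<in> {1..3}" for i
    using two_neighbours_cyc_adj[of i i 4] that by auto
  then show False
    using cyc_adj_at_most_two[of 4 1 2 3] by simp
qed

lemma M_IV_not_word_representable: "\<not> word_representable M_IV"
proof
  define N :: "nat \<Rightarrow> nat set" where "N i =
    (if i = 1 then {1, 2} else if i = 2 then {3, 4} else if i = 3 then {5, 6} else {2, 4, 6})" for i
  assume "word_representable M_IV"
  then obtain w where "split_representant {1..6} {1..4} N w"
    unfolding M_IV_def N_def[abs_def] by (rule split_representantE) auto
  then interpret split_representant "{1..6}" "{1..4}" N w .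
  have pairs: "cyc_adj 2 1" "cyc_adj 4 3" "cyc_adj 6 5"
    using two_neighbours_cyc_adj[of 1 1 2] two_neighbours_cyc_adj[of 2 3 4]
      two_neighbours_cyc_adj[of 3 5 6] cyc_adj_commute by (simp_all add: N_def)
  obtain m where "m \<in> {2, 4, 6}" "\<forall>x\<in>{2, 4, 6}. x \<noteq> m \<longrightarrow> cyc_adj m x"
    using three_neighbours_middle[of 4 2 4 6] by (auto simp: N_def)
  then show False
    using pairs cyc_adj_at_most_two[of 2 4 6 1] cyc_adj_at_most_two[of 4 2 6 3]
      cyc_adj_at_most_two[of 6 2 4 5] cyc_adj_commute by auto
qed

lemma M_V_not_word_representable: "\<not> word_representable M_V"
proof
  define N :: "nat \<Rightarrow> nat set" where "N i =
    (if i = 1 then {1, 2} else if i = 2 then {3, 4}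
     else if i = 3 then {1, 4, 5} else {1, 2, 3, 4})" for i
  assume "word_representable M_V"
  then obtain w where "split_representant {1..5} {1..4} N w"
    unfolding M_V_def N_def[abs_def] by (rule split_representantE) auto
  then interpret split_representant "{1..5}" "{1..4}" N w .
  have N34: "N 3 = {1, 5, 4}" "N 4 = {1, 2, 3, 4}"
    by (auto simp: N_def)
  have "cyc_adj 1 2" "cyc_adj 3 4"
    using two_neighbours_cyc_adj[of 1 1 2] two_neighbours_cyc_adj[of 2 3 4] by (simp_all add: N_def)
  moreover obtain m where "m \<in> {1, 4, 5}" "\<forall>x\<in>{1, 4, 5}. x \<noteq> m \<longrightarrow> cyc_adj m x"
    using three_neighbours_middle[of 3 1 4 5] N34 by (auto simp: insert_commute)
  ultimately have "cyc_adj 5 1" "cyc_adj 5 4"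
    using cyc_adj_at_most_two[of 1 4 5 2] cyc_adj_at_most_two[of 4 1 5 3] cyc_adj_commute by auto
  then show False
    using cycle_path_neighbourhood_not_nested[of 3 4 1 5 4] N34 by simp
qed

theorem lemma15:
  shows "word_representable F0
    \<and> (\<forall>k. k \<ge> 4 \<and> even k \<longrightarrow> word_representable (even_sun k))
    \<and> (\<forall>k. k \<ge> 5 \<and> odd k \<longrightarrow> word_representable (F1 k) \<and> word_representable (F2 k))
    \<and> (\<forall>k. k \<ge> 3 \<and> odd k \<longrightarrow> \<not> word_representable (odd_sun_center k))
    \<and> \<not> word_representable K1_tent
    \<and> (\<forall>k. k \<ge> 4 \<and> even k \<longrightarrow> \<not> word_representable (M_II k))
    \<and> \<not> word_representable M_III3
    \<and> (\<forall>k. k \<ge> 4 \<and> even k \<longrightarrow> \<not> word_representable (M_III k))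
    \<and> \<not> word_representable M_IV
    \<and> \<not> word_representable M_V"
  by (simp add: word_representable_F0 word_representable_even_sun word_representable_F1
      word_representable_F2 odd_sun_center_not_word_representable K1_tent_not_word_representable
      M_II_not_word_representable M_III3_not_word_representable M_III_not_word_representable
      M_IV_not_word_representable M_V_not_word_representable)

end
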